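(* Let $\mathcal{A}$ be a central and essential arrangement in $\mathbb{Q}^l$ as in the context, with $\lcm$-period $\rho_0$, and let $\sigma$ be a term ordering. If a prime $p$ is not $(\sigma,l)$-lucky for $\mathcal{A}$, then $p$ divides $\rho_0$.
   Context: $\mathcal{A}=\{H_1,\dots,H_n\}$: $n$ distinct linear hyperplanes in $\mathbb{Q}^l$ with $\bigcap H_i=\{0\}$, $H_i=\{\alpha_i=0\}$, $\alpha_i=\sum_{k=1}^lc_{ki}x_k$ with $c_{ki}\in\mathbb{Z}$ not all divisible by any prime. Let $C=(c_{ki})\in\mathrm{Mat}_{l\times n}(\mathbb{Z})$ with columns $c_1,\dots,c_n$; for nonempty $J=\{i_1<\dots<i_k\}\subseteq[n]$, $C_J=(c_{i_1},\dots,c_{i_k})$, with Smith normal form having nonzero diagonal entries $e_{J,1}\mid\dots\mid e_{J,r}$ (positive), $r=\mathrm{rk}(C_J)$; $e(J)=e_{J,r}$ and $\rho_0=\lcm\{e(J): 1\le|J|\le l\}$. Gröbner notions: for a term ordering $\sigma$ and nonzero $f\in\mathbb{Z}[x_1,\dots,x_l]$, $\mathrm{LM}_\sigma(f)$ is the $\sigma$-leading term times its coefficient $\mathrm{LC}_\sigma(f)$. A minimal strong $\sigma$-Gröbner basis of an ideal $I\subseteq\mathbb{Z}[x_1,\dots,x_l]$ is a finite generating set $G$ of nonzero elements of $I$ such that every nonzero $f\in I$ has $\mathrm{LM}_\sigma(f)$ divisible by some $\mathrm{LM}_\sigma(g)$, $g\in G$, and no $\mathrm{LM}_\sigma(g)$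 divides $\mathrm{LM}_\sigma(g')$ for distinct $g,g'$; its set of leading coefficients is independent of the choice. $p$ is $\sigma$-lucky for $I$ if it divides none of them; $p$ is $(\sigma,l)$-lucky for $\mathcal{A}$ if it is $\sigma$-lucky for every ideal $\langle\alpha_{i_1},\dots,\alpha_{i_l}\rangle\subseteq\mathbb{Z}[x_1,\dots,x_l]$ with $i_1<\dots<i_l$ and $\operatorname{codim}(H_{i_1}\cap\dots\cap H_{i_l})=l$. *)

theory Defs
  imports "HOL-Library.Poly_Mapping" "Jordan_Normal_Form.Matrix" "HOL-Computational_Algebra.Primes"
begin

text \<open>C is an l x n integer matrix; column i (0-based, i < n) gives the linear form alpha_i.
  The hyperplane H_i in Q^l (vectors of dimension l).\<close>

definition hyp :: "int mat \<Rightarrow> nat \<Rightarrow> rat vec set" where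
  "hyp C i = {x. dim_vec x = dim_row C \<and> (\<Sum>k<dim_row C. of_int (C $$ (k, i)) * x $ k) = 0}"

definition primitive_column :: "int mat \<Rightarrow> nat \<Rightarrow> bool" where
  "primitive_column C i \<longleftrightarrow> (\<forall>q::int. prime q \<longrightarrow> \<not> (\<forall>k<dim_row C. q dvd C $$ (k, i)))"

definition central_essential_arr :: "nat \<Rightarrow> nat \<Rightarrow> int mat \<Rightarrow> bool" where
  "central_essential_arr l n C \<longleftrightarrow>
     C \<in> carrier_mat l n \<and>
     inj_on (hyp C) {..<n} \<and>
     (\<forall>i<n. primitive_column C i) \<and>
     {x. dim_vec x = l} \<inter> (\<Inter>i<n. hyp C i) = {0\<^sub>v l}"

definition col_submat :: "int mat \<Rightarrow> nat set \<Rightarrow> int mat" where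
  "col_submat C J = mat (dim_row C) (card J) (\<lambda>(k, j). C $$ (k, sorted_list_of_set J ! j))"

definition is_SNF_last :: "int mat \<Rightarrow> int \<Rightarrow> bool" where
  "is_SNF_last A e \<longleftrightarrow>
     (\<exists>P Q r. P \<in> carrier_mat (dim_row A) (dim_row A) \<and> Q \<in> carrier_mat (dim_col A) (dim_col A) \<and>
        invertible_mat P \<and> invertible_mat Q \<and> 1 \<le> r \<and> r \<le> min (dim_row A) (dim_col A) \<and>
        (let D = P * A * Q in
          (\<forall>i<dim_row A. \<forall>j<dim_col A. i \<noteq> j \<longrightarrow> D $$ (i, j) = 0) \<and>
          (\<forall>i<r. D $$ (i, i) > 0) \<and>
          (\<forall>i. r \<le> i \<and> i < min (dim_row A) (dim_col A) \<longrightarrow> D $$ (i, i) = 0) \<and>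
          (\<forall>i. i + 1 < r \<longrightarrow> D $$ (i, i) dvd D $$ (i + 1, i + 1)) \<and>
          e = D $$ (r - 1, r - 1)))"

definition e_of :: "int mat \<Rightarrow> nat set \<Rightarrow> int" where
  "e_of C J = (SOME e. is_SNF_last (col_submat C J) e)"

definition rho0 :: "nat \<Rightarrow> nat \<Rightarrow> int mat \<Rightarrow> int" where
  "rho0 l n C = Lcm {e_of C J | J. J \<subseteq> {..<n} \<and> J \<noteq> {} \<and> card J \<le> l}"

type_synonym mono = "nat \<Rightarrow>\<^sub>0 nat"
type_synonym zpoly = "mono \<Rightarrow>\<^sub>0 int"

definition monos_l :: "nat \<Rightarrow> mono set" where
  "monos_l l = {m. Poly_Mapping.keys m \<subseteq> {..<l}}"

text \<open>The ring Z[x_0,...,x_(l-1)] inside Z[x_0, x_1, ...].\<close>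
definition zpolys :: "nat \<Rightarrow> zpoly set" where
  "zpolys l = {f. Poly_Mapping.keys f \<subseteq> monos_l l}"

definition Var :: "nat \<Rightarrow> zpoly" where
  "Var k = Poly_Mapping.single (Poly_Mapping.single k 1) 1"

definition lin_form :: "int mat \<Rightarrow> nat \<Rightarrow> zpoly" where
  "lin_form C i = (\<Sum>k<dim_row C. Poly_Mapping.single 0 (C $$ (k, i)) * Var k)"

definition ideal_gen :: "nat \<Rightarrow> zpoly set \<Rightarrow> zpoly set" where
  "ideal_gen l S = {\<Sum>s\<in>S. h s * s | h. \<forall>s\<in>S. h s \<in> zpolys l}"

definition term_order :: "nat \<Rightarrow> (mono \<Rightarrow> mono \<Rightarrow> bool) \<Rightarrow> bool" where
  "term_order l ord \<longleftrightarrow>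
     (\<forall>m\<in>monos_l l. ord m m) \<and>
     (\<forall>m1\<in>monos_l l. \<forall>m2\<in>monos_l l. \<forall>m3\<in>monos_l l. ord m1 m2 \<longrightarrow> ord m2 m3 \<longrightarrow> ord m1 m3) \<and>
     (\<forall>m1\<in>monos_l l. \<forall>m2\<in>monos_l l. ord m1 m2 \<longrightarrow> ord m2 m1 \<longrightarrow> m1 = m2) \<and>
     (\<forall>m1\<in>monos_l l. \<forall>m2\<in>monos_l l. ord m1 m2 \<or> ord m2 m1) \<and>
     (\<forall>m\<in>monos_l l. ord 0 m) \<and>
     (\<forall>m1\<in>monos_l l. \<forall>m2\<in>monos_l l. \<forall>t\<in>monos_l l. ord m1 m2 \<longrightarrow> ord (m1 + t) (m2 + t))"

definition lead_mono :: "(mono \<Rightarrow> mono \<Rightarrow> bool) \<Rightarrow> zpoly \<Rightarrow> mono" where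
  "lead_mono ord f = (THE m. m \<in> Poly_Mapping.keys f \<and> (\<forall>m'\<in>Poly_Mapping.keys f. ord m' m))"

definition lead_coeff_z :: "(mono \<Rightarrow> mono \<Rightarrow> bool) \<Rightarrow> zpoly \<Rightarrow> int" where
  "lead_coeff_z ord f = Poly_Mapping.lookup f (lead_mono ord f)"

definition lm_dvd :: "(mono \<Rightarrow> mono \<Rightarrow> bool) \<Rightarrow> zpoly \<Rightarrow> zpoly \<Rightarrow> bool" where
  "lm_dvd ord g f \<longleftrightarrow>
     (\<forall>v. Poly_Mapping.lookup (lead_mono ord g) v \<le> Poly_Mapping.lookup (lead_mono ord f) v) \<and>
     lead_coeff_z ord g dvd lead_coeff_z ord f"

definition is_min_strong_GB :: "nat \<Rightarrow> (mono \<Rightarrow> mono \<Rightarrow> bool) \<Rightarrow> zpoly set \<Rightarrow> zpoly set \<Rightarrow> bool" where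
  "is_min_strong_GB l ord I G \<longleftrightarrow>
     finite G \<and> G \<subseteq> I \<and> 0 \<notin> G \<and> ideal_gen l G = I \<and>
     (\<forall>f\<in>I. f \<noteq> 0 \<longrightarrow> (\<exists>g\<in>G. lm_dvd ord g f)) \<and>
     (\<forall>g\<in>G. \<forall>g'\<in>G. g \<noteq> g' \<longrightarrow> \<not> lm_dvd ord g g')"

text \<open>p is sigma-lucky for I: p divides none of the leading coefficients of a minimal strong
  Groebner basis (these are independent of the choice, so we quantify over all of them).\<close>
definition sigma_lucky :: "nat \<Rightarrow> (mono \<Rightarrow> mono \<Rightarrow> bool) \<Rightarrow> zpoly set \<Rightarrow> nat \<Rightarrow> bool" where
  "sigma_lucky l ord I p \<longleftrightarrow>
     (\<forall>G. is_min_strong_GB l ord I G \<longrightarrow> (\<forall>g\<in>G. \<not> int p dvd lead_coeff_z ord g))"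

definition sigma_l_lucky :: "nat \<Rightarrow> nat \<Rightarrow> int mat \<Rightarrow> (mono \<Rightarrow> mono \<Rightarrow> bool) \<Rightarrow> nat \<Rightarrow> bool" where
  "sigma_l_lucky l n C ord p \<longleftrightarrow>
     (\<forall>J. J \<subseteq> {..<n} \<and> card J = l \<and> {x. dim_vec x = l} \<inter> (\<Inter>i\<in>J. hyp C i) = {0\<^sub>v l} \<longrightarrow>
        sigma_lucky l ord (ideal_gen l (lin_form C ` J)) p)"

end

theory Submission
  imports Defs "Jordan_Normal_Form.Column_Operations" "Jordan_Normal_Form.Determinant"
begin

text \<open>
  Suppose p divides a leading coefficient c of an element g of a minimal strong Groebner basis of
  I_J = (alpha_j : j in J), where |J| = l and the H_j meet only in 0. By Cramer's rule
  det(C_J) x_k lies in I_J for every variable x_k. As I_J has no constant terms, the leading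
  monomial of g is m' x_k for some k, and a Bezout combination of g and m' det(C_J) x_k is an
  element of I_J with the same leading monomial and leading coefficient gcd(c, det C_J). Its
  leading term is divisible by that of some basis element, which then also divides the leading
  term of g; minimality gives c | det C_J. Finally det C_J = +-e_1 ... e_l for the Smith normal
  form of C_J and e_i | e_l = e(J), so the prime p divides e(J) and hence rho_0.
  The Smith normal form over Z is obtained by the usual pivoting: an equivalent matrix whose
  corner entry has least absolute value divides all entries and can be split off as a 1 x 1 block.
\<close>

section \<open>Equivalence of square matrices\<close>

lemma invertible_matI:
  assumes "P \<in> carrier_mat n n" "Q \<in> carrier_mat n n" "P * Q = 1\<^sub>m n" "Q * P = 1\<^sub>m n"
  shows "invertible_mat P"
  using assms unfolding invertible_mat_def inverts_mat_def by auto

lemma invertible_matE: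
  assumes "invertible_mat (P :: 'a :: semiring_1 mat)" and P: "P \<in> carrier_mat n n"
  obtains Q where "Q \<in> carrier_mat n n" "P * Q = 1\<^sub>m n" "Q * P = 1\<^sub>m n"
proof -
  obtain Q where Q: "P * Q = 1\<^sub>m n" "Q * P = 1\<^sub>m (dim_row Q)"
    using assms unfolding invertible_mat_def inverts_mat_def by auto
  have "dim_col Q = n" using Q(1) by (metis index_mult_mat(3) index_one_mat(3))
  moreover have "dim_row Q = n" using Q(2) P by (metis carrier_matD(2) index_mult_mat(3) index_one_mat(3))
  ultimately show thesis using that Q by auto
qed

lemma invertible_mat_one: "invertible_mat (1\<^sub>m n :: 'a :: semiring_1 mat)"
  by (rule invertible_matI[of _ n "1\<^sub>m n"]) auto

lemma invertible_mat_mult: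
  assumes P: "P \<in> carrier_mat n n" "invertible_mat P" and Q: "Q \<in> carrier_mat n n" "invertible_mat (Q :: 'a :: semiring_1 mat)"
  shows "invertible_mat (P * Q)"
proof -
  obtain P' where P': "P' \<in> carrier_mat n n" "P * P' = 1\<^sub>m n" "P' * P = 1\<^sub>m n"
    using invertible_matE P by blast
  obtain Q' where Q': "Q' \<in> carrier_mat n n" "Q * Q' = 1\<^sub>m n" "Q' * Q = 1\<^sub>m n"
    using invertible_matE Q by blast
  have "P * Q * (Q' * P') = P * (Q * Q' * P')"
    using P(1) Q(1) P'(1) Q'(1) by (simp add: assoc_mult_mat[of _ n n _ n _ n])
  with P(1) P'(1,2) Q'(2) have "P * Q * (Q' * P') = 1\<^sub>m n"
    by (simp del: assoc_mult_mat)
  moreover have "Q' * P' * (P * Q) = Q' * (P' * P * Q)"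
    using P(1) Q(1) P'(1) Q'(1) by (simp add: assoc_mult_mat[of _ n n _ n _ n])
  with Q(1) Q'(1,3) P'(3) have "Q' * P' * (P * Q) = 1\<^sub>m n"
    by (simp del: assoc_mult_mat)
  ultimately show ?thesis
    using P Q P' Q' by (intro invertible_matI[of _ n "Q' * P'"]) auto
qed

lemma invertible_mat_transpose:
  assumes "P \<in> carrier_mat n n" "invertible_mat (P :: 'a :: comm_semiring_1 mat)"
  shows "invertible_mat (transpose_mat P)"
proof -
  obtain Q where Q: "Q \<in> carrier_mat n n" "P * Q = 1\<^sub>m n" "Q * P = 1\<^sub>m n"
    using invertible_matE assms by blast
  have "transpose_mat P * transpose_mat Q = 1\<^sub>m n"
    using Q assms transpose_mult[of Q n n P n] by simp
  moreover have "transpose_mat Q * transpose_mat P = 1\<^sub>m n"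
    using Q assms transpose_mult[of P n n Q n] by simp
  ultimately show ?thesis
    using Q assms by (intro invertible_matI[of _ n "transpose_mat Q"]) auto
qed

lemma invertible_mat_det_nonzero:
  assumes "P \<in> carrier_mat n n" "invertible_mat (P :: 'a :: comm_ring_1 mat)"
  shows "det P \<noteq> 0"
proof -
  obtain Q where "Q \<in> carrier_mat n n" "P * Q = 1\<^sub>m n"
    using invertible_matE assms by blast
  then have "det P * det Q = 1" using det_mult[of P n Q] assms(1) by simp
  then show ?thesis by auto
qed

definition equivalent_mat :: "nat \<Rightarrow> 'a :: comm_ring_1 mat \<Rightarrow> 'a mat \<Rightarrow> bool" where
  "equivalent_mat n A B \<longleftrightarrow> (\<exists>P Q. P \<in> carrier_mat n n \<and> Q \<in> carrier_mat n n \<and>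
     invertible_mat P \<and> invertible_mat Q \<and> B = P * A * Q)"

lemma equivalent_matI:
  assumes "P \<in> carrier_mat n n" "Q \<in> carrier_mat n n" "invertible_mat P" "invertible_mat Q"
    and "B = P * A * Q"
  shows "equivalent_mat n A B"
  using assms unfolding equivalent_mat_def by blast

lemma equivalent_mat_refl: "A \<in> carrier_mat n n \<Longrightarrow> equivalent_mat n A A"
  by (rule equivalent_matI[of "1\<^sub>m n" n "1\<^sub>m n"]) (auto simp: invertible_mat_one)

lemma equivalent_mat_carrier:
  "A \<in> carrier_mat n n \<Longrightarrow> equivalent_mat n A B \<Longrightarrow> B \<in> carrier_mat n n"
  unfolding equivalent_mat_def by auto

lemma equivalent_mat_trans:
  assumes A: "A \<in> carrier_mat n n" and AB: "equivalent_mat n A B" and BC: "equivalent_mat n B C"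
  shows "equivalent_mat n A C"
proof -
  obtain P Q where PQ: "P \<in> carrier_mat n n" "Q \<in> carrier_mat n n" "invertible_mat P"
      "invertible_mat Q" "B = P * A * Q"
    using AB unfolding equivalent_mat_def by blast
  obtain P' Q' where PQ': "P' \<in> carrier_mat n n" "Q' \<in> carrier_mat n n" "invertible_mat P'"
      "invertible_mat Q'" "C = P' * B * Q'"
    using BC unfolding equivalent_mat_def by blast
  have "C = (P' * P) * A * (Q * Q')"
    using A PQ PQ' by (simp add: assoc_mult_mat[of _ n n _ n _ n])
  then show ?thesis
    using PQ PQ' by (intro equivalent_matI[of "P' * P" n "Q * Q'"]) (auto intro: invertible_mat_mult)
qed

lemma equivalent_mat_transpose:
  assumes A: "A \<in> carrier_mat n n" and "equivalent_mat n A B"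
  shows "equivalent_mat n (transpose_mat A) (transpose_mat B)"
proof -
  obtain P Q where PQ: "P \<in> carrier_mat n n" "Q \<in> carrier_mat n n" "invertible_mat P"
      "invertible_mat Q" "B = P * A * Q"
    using assms(2) unfolding equivalent_mat_def by blast
  have "transpose_mat B = transpose_mat Q * transpose_mat A * transpose_mat P"
    using A PQ by (simp add: transpose_mult[of _ n n _ n] assoc_mult_mat[of _ n n _ n _ n])
  then show ?thesis
    using PQ by (intro equivalent_matI[of "transpose_mat Q" n "transpose_mat P"])
      (auto intro: invertible_mat_transpose)
qed

lemma equivalent_mat_transposeI:
  assumes "A \<in> carrier_mat n n" "equivalent_mat n (transpose_mat A) B"
  shows "equivalent_mat n A (transpose_mat B)"
  using equivalent_mat_transpose[of "transpose_mat A" n B] assms by simp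

lemma equivalent_mat_addrow:
  assumes "A \<in> carrier_mat n n" "k < n" "l < n" "k \<noteq> l"
  shows "equivalent_mat n A (addrow a k l A)"
proof (rule equivalent_matI[of "addrow_mat n a k l" n "1\<^sub>m n"])
  show "invertible_mat (addrow_mat n a k l)"
    using assms addrow_mat_inv[of k n l a] addrow_mat_inv[of k n l "-a"]
    by (intro invertible_matI[of _ n "addrow_mat n (-a) k l"]) auto
qed (use assms addrow_mat in \<open>auto simp: invertible_mat_one\<close>)

lemma equivalent_mat_swaprows:
  assumes "A \<in> carrier_mat n n" "k < n" "l < n"
  shows "equivalent_mat n A (swaprows k l A)"
proof (rule equivalent_matI[of "swaprows_mat n k l" n "1\<^sub>m n"])
  show "invertible_mat (swaprows_mat n k l)"
    using assms swaprows_mat_inv[of k n l]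
    by (intro invertible_matI[of _ n "swaprows_mat n k l"]) auto
qed (use assms swaprows_mat in \<open>auto simp: invertible_mat_one\<close>)

definition mat_dvd :: "'a :: comm_semiring_1 \<Rightarrow> 'a mat \<Rightarrow> bool" where
  "mat_dvd d A \<longleftrightarrow> (\<forall>i<dim_row A. \<forall>j<dim_col A. d dvd A $$ (i, j))"

lemma mat_dvd_mult_left: "mat_dvd d B \<Longrightarrow> dim_col A = dim_row B \<Longrightarrow> mat_dvd d (A * B)"
  unfolding mat_dvd_def by (auto simp: scalar_prod_def intro!: dvd_sum dvd_mult)

lemma mat_dvd_mult_right: "mat_dvd d A \<Longrightarrow> dim_col A = dim_row B \<Longrightarrow> mat_dvd d (A * B)"
  unfolding mat_dvd_def by (auto simp: scalar_prod_def intro!: dvd_sum dvd_mult2)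

lemma mat_dvd_transpose: "mat_dvd d (transpose_mat A) \<longleftrightarrow> mat_dvd d A"
  unfolding mat_dvd_def by auto

lemma mat_dvd_equivalent_mat:
  assumes "A \<in> carrier_mat n n" "equivalent_mat n A B" "mat_dvd d A"
  shows "mat_dvd d B"
proof -
  obtain P Q where PQ: "P \<in> carrier_mat n n" "Q \<in> carrier_mat n n" "B = P * A * Q"
    using assms(2) unfolding equivalent_mat_def by blast
  show ?thesis
    unfolding PQ(3) using PQ assms(1,3) by (intro mat_dvd_mult_right mat_dvd_mult_left) auto
qed

section \<open>Smith normal form over the integers\<close>

lemma corner_reduce_by_rows:
  fixes A :: "int mat"
  assumes A: "A \<in> carrier_mat (Suc n) (Suc n)" and i: "i < Suc n"
    and nz: "A $$ (0, 0) \<noteq> 0" and ndvd: "\<not> A $$ (0, 0) dvd A $$ (i, 0)"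
  shows "\<exists>B. equivalent_mat (Suc n) A B \<and> B $$ (0, 0) \<noteq> 0 \<and> \<bar>B $$ (0, 0)\<bar> < \<bar>A $$ (0, 0)\<bar>"
proof -
  define q where "q = A $$ (i, 0) div A $$ (0, 0)"
  define B where "B = swaprows 0 i (addrow (- q) i 0 A)"
  have "i \<noteq> 0" using ndvd by (cases "i = 0") simp_all
  then have "equivalent_mat (Suc n) A B"
    unfolding B_def using A i
    by (intro equivalent_mat_trans[OF A equivalent_mat_addrow equivalent_mat_swaprows]) auto
  moreover have "B $$ (0, 0) = A $$ (i, 0) mod A $$ (0, 0)"
    unfolding B_def q_def using A i by (simp add: minus_div_mult_eq_mod[symmetric])
  moreover have "A $$ (i, 0) mod A $$ (0, 0) \<noteq> 0" "\<bar>A $$ (i, 0) mod A $$ (0, 0)\<bar> < \<bar>A $$ (0, 0)\<bar>"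
    using ndvd nz by (auto simp: dvd_eq_mod_eq_0 abs_mod_less)
  ultimately show ?thesis by auto
qed

lemma corner_reduce_by_cols:
  fixes A :: "int mat"
  assumes A: "A \<in> carrier_mat (Suc n) (Suc n)" and j: "j < Suc n"
    and nz: "A $$ (0, 0) \<noteq> 0" and ndvd: "\<not> A $$ (0, 0) dvd A $$ (0, j)"
  shows "\<exists>B. equivalent_mat (Suc n) A B \<and> B $$ (0, 0) \<noteq> 0 \<and> \<bar>B $$ (0, 0)\<bar> < \<bar>A $$ (0, 0)\<bar>"
proof -
  obtain B where B: "equivalent_mat (Suc n) (transpose_mat A) B" "B $$ (0, 0) \<noteq> 0"
      "\<bar>B $$ (0, 0)\<bar> < \<bar>A $$ (0, 0)\<bar>"
    using corner_reduce_by_rows[of "transpose_mat A" n j] assms by auto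
  have "B \<in> carrier_mat (Suc n) (Suc n)"
    using equivalent_mat_carrier[OF _ B(1)] A by simp
  then show ?thesis
    using B equivalent_mat_transposeI[OF A B(1)] by (intro exI[of _ "transpose_mat B"]) auto
qed

lemma corner_reduce_inner:
  fixes A :: "int mat"
  assumes A: "A \<in> carrier_mat (Suc n) (Suc n)" and i: "i < Suc n" and j: "j < Suc n"
    and nz: "A $$ (0, 0) \<noteq> 0" and dvd: "A $$ (0, 0) dvd A $$ (i, 0)"
    and ndvd: "\<not> A $$ (0, 0) dvd A $$ (i, j)"
  shows "\<exists>B. equivalent_mat (Suc n) A B \<and> B $$ (0, 0) \<noteq> 0 \<and> \<bar>B $$ (0, 0)\<bar> < \<bar>A $$ (0, 0)\<bar>"
proof (cases "A $$ (0, 0) dvd A $$ (0, j)")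
  case False
  then show ?thesis using corner_reduce_by_cols[OF A j nz] by blast
next
  case True
  have "i \<noteq> 0" using True ndvd by (cases "i = 0") simp_all
  define q where "q = A $$ (i, 0) div A $$ (0, 0)"
  define A' where "A' = addrow 1 0 i (addrow (- q) i 0 A)"
  have A': "A' \<in> carrier_mat (Suc n) (Suc n)" "equivalent_mat (Suc n) A A'"
    unfolding A'_def using A i \<open>i \<noteq> 0\<close>
    by (auto intro!: equivalent_mat_trans[OF A equivalent_mat_addrow equivalent_mat_addrow])
  \<comment> \<open>row i is first cleared in column 0, then added to row 0: the corner survives\<close>
  have "A' $$ (0, 0) = A $$ (0, 0)"
    unfolding A'_def q_def using A i dvd \<open>i \<noteq> 0\<close> by simp
  moreover have "A' $$ (0, j) = A $$ (i, j) + (1 - q) * A $$ (0, j)"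
    unfolding A'_def using A i j \<open>i \<noteq> 0\<close> by (simp add: algebra_simps)
  then have "\<not> A' $$ (0, 0) dvd A' $$ (0, j)"
    using True ndvd \<open>A' $$ (0, 0) = A $$ (0, 0)\<close> by (auto simp: dvd_add_left_iff)
  ultimately obtain B where "equivalent_mat (Suc n) A' B" "B $$ (0, 0) \<noteq> 0"
      "\<bar>B $$ (0, 0)\<bar> < \<bar>A $$ (0, 0)\<bar>"
    using corner_reduce_by_cols[OF A'(1) j] nz by auto
  then show ?thesis using equivalent_mat_trans[OF A A'(2)] by blast
qed

lemma corner_divides_all:
  fixes A :: "int mat"
  assumes A: "A \<in> carrier_mat (Suc n) (Suc n)" and nz: "A $$ (0, 0) \<noteq> 0"
  shows "\<exists>B. equivalent_mat (Suc n) A B \<and> B $$ (0, 0) \<noteq> 0 \<and> mat_dvd (B $$ (0, 0)) B"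
  using A nz
proof (induction "nat \<bar>A $$ (0, 0)\<bar>" arbitrary: A rule: less_induct)
  case less
  show ?case
  proof (cases "mat_dvd (A $$ (0, 0)) A")
    case True
    then show ?thesis using less.prems equivalent_mat_refl by blast
  next
    case False
    then obtain i j where ij: "i < Suc n" "j < Suc n" "\<not> A $$ (0, 0) dvd A $$ (i, j)"
      using less.prems(1) unfolding mat_dvd_def by auto
    obtain B where B: "equivalent_mat (Suc n) A B" "B $$ (0, 0) \<noteq> 0"
        "\<bar>B $$ (0, 0)\<bar> < \<bar>A $$ (0, 0)\<bar>"
      using corner_reduce_by_rows[OF less.prems(1) ij(1) less.prems(2)]
        corner_reduce_inner[OF less.prems(1) ij(1,2) less.prems(2) _ ij(3)] by blast
    have "B \<in> carrier_mat (Suc n) (Suc n)"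
      using equivalent_mat_carrier[OF less.prems(1) B(1)] .
    moreover have "nat \<bar>B $$ (0, 0)\<bar> < nat \<bar>A $$ (0, 0)\<bar>"
      using B(3) by simp
    ultimately obtain B' where "equivalent_mat (Suc n) B B'" "B' $$ (0, 0) \<noteq> 0"
        "mat_dvd (B' $$ (0, 0)) B'"
      using less.hyps B(2) by blast
    then show ?thesis using equivalent_mat_trans[OF less.prems(1) B(1)] by blast
  qed
qed

lemma exists_equivalent_nonzero_corner:
  fixes A :: "int mat"
  assumes A: "A \<in> carrier_mat (Suc n) (Suc n)" and "A \<noteq> 0\<^sub>m (Suc n) (Suc n)"
  shows "\<exists>B. equivalent_mat (Suc n) A B \<and> B $$ (0, 0) \<noteq> 0"
proof -
  obtain i j where ij: "i < Suc n" "j < Suc n" "A $$ (i, j) \<noteq> 0"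
    using assms by (metis carrier_matD eq_matI index_zero_mat)
  define A1 where "A1 = swaprows 0 i A"
  define A2 where "A2 = swaprows 0 j (transpose_mat A1)"
  have A1: "A1 \<in> carrier_mat (Suc n) (Suc n)" "equivalent_mat (Suc n) A A1"
    unfolding A1_def using A ij by (auto intro: equivalent_mat_swaprows)
  have "equivalent_mat (Suc n) (transpose_mat A1) A2"
    unfolding A2_def using A1 ij by (auto intro: equivalent_mat_swaprows)
  then have "equivalent_mat (Suc n) A (transpose_mat A2)"
    using equivalent_mat_trans[OF A A1(2) equivalent_mat_transposeI[OF A1(1)]] by blast
  moreover have "transpose_mat A2 $$ (0, 0) = A $$ (i, j)"
    unfolding A2_def A1_def using A ij by simp
  ultimately show ?thesis using ij(3) by auto
qed

lemma clear_first_column: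
  fixes A :: "int mat"
  assumes A: "A \<in> carrier_mat (Suc n) (Suc n)" and dvd: "mat_dvd (A $$ (0, 0)) A"
  shows "\<exists>B. equivalent_mat (Suc n) A B \<and> (\<forall>j<Suc n. B $$ (0, j) = A $$ (0, j)) \<and>
    (\<forall>i\<in>{1..n}. B $$ (i, 0) = 0)"
proof -
  have "\<exists>B. equivalent_mat (Suc n) A B \<and> (\<forall>j<Suc n. B $$ (0, j) = A $$ (0, j)) \<and>
    (\<forall>i\<in>{1..k}. B $$ (i, 0) = 0)" if "k \<le> n" for k
    using that
  proof (induction k)
    case 0
    then show ?case using equivalent_mat_refl[OF A] by auto
  next
    case (Suc k)
    then obtain B where B: "equivalent_mat (Suc n) A B" "\<forall>j<Suc n. B $$ (0, j) = A $$ (0, j)"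
        "\<forall>i\<in>{1..k}. B $$ (i, 0) = 0"
      by auto
    have Bc: "B \<in> carrier_mat (Suc n) (Suc n)" using equivalent_mat_carrier[OF A B(1)] .
    have "A $$ (0, 0) dvd B $$ (Suc k, 0)"
      using mat_dvd_equivalent_mat[OF A B(1) dvd] Bc Suc.prems unfolding mat_dvd_def by auto
    then have "B $$ (Suc k, 0) = B $$ (Suc k, 0) div A $$ (0, 0) * B $$ (0, 0)"
      using B(2) by simp
    then show ?case
      using B Bc Suc.prems
      by (intro exI[of _ "addrow (- (B $$ (Suc k, 0) div A $$ (0, 0))) (Suc k) 0 B"] conjI
          equivalent_mat_trans[OF A B(1) equivalent_mat_addrow]) (auto simp: le_Suc_eq)
  qed
  then show ?thesis by blast
qed

definition corner_block :: "'a :: zero \<Rightarrow> 'a mat \<Rightarrow> 'a mat" where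
  "corner_block d M = four_block_mat (mat 1 1 (\<lambda>_. d)) (0\<^sub>m 1 (dim_col M)) (0\<^sub>m (dim_row M) 1) M"

lemma corner_block_carrier [simp]:
  "M \<in> carrier_mat n n \<Longrightarrow> corner_block d M \<in> carrier_mat (Suc n) (Suc n)"
  unfolding corner_block_def by auto

lemma dim_corner_block [simp]:
  "dim_row (corner_block d M) = Suc (dim_row M)" "dim_col (corner_block d M) = Suc (dim_col M)"
  unfolding corner_block_def by simp_all

lemma index_corner_block:
  assumes "M \<in> carrier_mat n n" "i < Suc n" "j < Suc n"
  shows "corner_block d M $$ (i, j) =
    (if i = 0 \<and> j = 0 then d else if i = 0 \<or> j = 0 then 0 else M $$ (i - 1, j - 1))"
  using assms unfolding corner_block_def by auto

lemma corner_block_mult: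
  fixes M N :: "'a :: comm_ring_1 mat"
  assumes "M \<in> carrier_mat n n" "N \<in> carrier_mat n n"
  shows "corner_block a M * corner_block b N = corner_block (a * b) (M * N)"
  using assms unfolding corner_block_def
  by (subst mult_four_block_mat[of _ 1 1 _ n _ n _ _ 1 _ n _ _]) (auto intro!: eq_matI simp: scalar_prod_def)

lemma corner_block_one: "corner_block 1 (1\<^sub>m n) = (1\<^sub>m (Suc n) :: 'a :: comm_ring_1 mat)"
  by (rule eq_matI) (auto simp: corner_block_def)

lemma equivalent_mat_corner_block:
  fixes M N :: "'a :: comm_ring_1 mat"
  assumes M: "M \<in> carrier_mat n n" and MN: "equivalent_mat n M N" and s: "s * s = 1"
  shows "equivalent_mat (Suc n) (corner_block d M) (corner_block (s * d) N)"
proof -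
  obtain P Q where PQ: "P \<in> carrier_mat n n" "Q \<in> carrier_mat n n" "invertible_mat P"
      "invertible_mat Q" "N = P * M * Q"
    using MN unfolding equivalent_mat_def by blast
  have invertible: "invertible_mat (corner_block t R)"
    if R: "R \<in> carrier_mat n n" "invertible_mat R" and t: "t * t = 1" for R :: "'a mat" and t
  proof -
    obtain R' where R': "R' \<in> carrier_mat n n" "R * R' = 1\<^sub>m n" "R' * R = 1\<^sub>m n"
      using invertible_matE R by blast
    then show ?thesis
      using R t corner_block_mult[OF R(1) R'(1)] corner_block_mult[OF R'(1) R(1)]
      by (intro invertible_matI[of _ "Suc n" "corner_block t R'"]) (auto simp: corner_block_one)
  qed
  have "corner_block (s * d) N = corner_block s P * corner_block d M * corner_block 1 Q"
    using PQ M corner_block_mult[OF PQ(1) M] corner_block_mult[of "P * M" n Q] by simp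
  then show ?thesis
    using PQ s invertible[of P s] invertible[of Q 1]
    by (intro equivalent_matI[of "corner_block s P" "Suc n" "corner_block 1 Q"]) auto
qed

lemma exists_equivalent_corner_block:
  fixes A :: "int mat"
  assumes A: "A \<in> carrier_mat (Suc n) (Suc n)" and nz: "A \<noteq> 0\<^sub>m (Suc n) (Suc n)"
  shows "\<exists>d M. d \<noteq> 0 \<and> M \<in> carrier_mat n n \<and> mat_dvd d M \<and>
    equivalent_mat (Suc n) A (corner_block d M)"
proof -
  obtain B0 where B0: "equivalent_mat (Suc n) A B0" "B0 $$ (0, 0) \<noteq> 0"
    using exists_equivalent_nonzero_corner[OF A nz] by blast
  have "B0 \<in> carrier_mat (Suc n) (Suc n)" using equivalent_mat_carrier[OF A B0(1)] .
  then obtain B where B: "equivalent_mat (Suc n) A B" "B $$ (0, 0) \<noteq> 0" "mat_dvd (B $$ (0, 0)) B"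
    using corner_divides_all[OF _ B0(2)] equivalent_mat_trans[OF A B0(1)] by blast
  define d where "d = B $$ (0, 0)"
  have Bc: "B \<in> carrier_mat (Suc n) (Suc n)" using equivalent_mat_carrier[OF A B(1)] .
  obtain B1 where B1: "equivalent_mat (Suc n) B B1" "\<forall>j<Suc n. B1 $$ (0, j) = B $$ (0, j)"
      "\<forall>i\<in>{1..n}. B1 $$ (i, 0) = 0"
    using clear_first_column[OF Bc B(3)] by blast
  have B1c: "B1 \<in> carrier_mat (Suc n) (Suc n)" using equivalent_mat_carrier[OF Bc B1(1)] .
  have B1T: "transpose_mat B1 \<in> carrier_mat (Suc n) (Suc n)" "transpose_mat B1 $$ (0, 0) = d"
      "mat_dvd d (transpose_mat B1)"
    using B1c B1(2) mat_dvd_equivalent_mat[OF Bc B1(1) B(3)] by (auto simp: d_def mat_dvd_transpose)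
  obtain B2 where B2: "equivalent_mat (Suc n) (transpose_mat B1) B2"
      "\<forall>j<Suc n. B2 $$ (0, j) = transpose_mat B1 $$ (0, j)" "\<forall>i\<in>{1..n}. B2 $$ (i, 0) = 0"
    using clear_first_column[OF B1T(1)] B1T(2,3) by auto
  have B2c: "B2 \<in> carrier_mat (Suc n) (Suc n)" using equivalent_mat_carrier[OF B1T(1) B2(1)] .
  define M where "M = mat n n (\<lambda>(i, j). B2 $$ (Suc j, Suc i))"
  have Mc: "M \<in> carrier_mat n n" by (simp add: M_def)
  have "transpose_mat B2 = corner_block d M"
  proof (rule eq_matI)
    fix i j assume "i < dim_row (corner_block d M)" "j < dim_col (corner_block d M)"
    then have ij: "i < Suc n" "j < Suc n" using Mc by simp_all
    show "transpose_mat B2 $$ (i, j) = corner_block d M $$ (i, j)"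
      unfolding index_corner_block[OF Mc ij] using B1c B2c B1(3) B2(2,3) B1T(2) ij
      by (cases i; cases j) (auto simp: M_def)
  qed (use B2c Mc in auto)
  have "mat_dvd d M"
    using mat_dvd_equivalent_mat[OF B1T(1) B2(1) B1T(3)] B2c unfolding mat_dvd_def M_def by auto
  moreover have "equivalent_mat (Suc n) A (corner_block d M)"
    using equivalent_mat_trans[OF A B(1) equivalent_mat_trans[OF Bc B1(1)
          equivalent_mat_transposeI[OF B1c B2(1)]]] \<open>transpose_mat B2 = corner_block d M\<close>
    by simp
  moreover have "d \<noteq> 0" using B(2) by (simp add: d_def)
  ultimately show ?thesis using Mc by blast
qed

definition Smith_normal_form_mat :: "int mat \<Rightarrow> bool" where
  "Smith_normal_form_mat D \<longleftrightarrow> diagonal_mat D \<and>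
     (\<forall>i < min (dim_row D) (dim_col D). 0 \<le> D $$ (i, i)) \<and>
     (\<forall>i. Suc i < min (dim_row D) (dim_col D) \<longrightarrow> D $$ (i, i) dvd D $$ (Suc i, Suc i))"

lemma Smith_normal_form_corner_block:
  assumes D: "D \<in> carrier_mat n n" "Smith_normal_form_mat D" and d: "0 \<le> d" "mat_dvd d D"
  shows "Smith_normal_form_mat (corner_block d D)"
  unfolding Smith_normal_form_mat_def diagonal_mat_def
proof (intro conjI allI impI)
  fix i j assume "i < dim_row (corner_block d D)" "j < dim_col (corner_block d D)" "i \<noteq> j"
  then show "corner_block d D $$ (i, j) = 0"
    using D unfolding Smith_normal_form_mat_def diagonal_mat_def
    by (auto simp: index_corner_block)
next
  fix i assume "i < min (dim_row (corner_block d D)) (dim_col (corner_block d D))"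
  then show "0 \<le> corner_block d D $$ (i, i)"
    using D d(1) unfolding Smith_normal_form_mat_def by (auto simp: index_corner_block)
next
  fix i assume i: "Suc i < min (dim_row (corner_block d D)) (dim_col (corner_block d D))"
  show "corner_block d D $$ (i, i) dvd corner_block d D $$ (Suc i, Suc i)"
  proof (cases i)
    case 0
    then show ?thesis using i D(1) d(2) by (auto simp: index_corner_block mat_dvd_def)
  next
    case (Suc i')
    then show ?thesis using i D unfolding Smith_normal_form_mat_def by (auto simp: index_corner_block)
  qed
qed

theorem Smith_normal_form_exists:
  fixes A :: "int mat"
  assumes "A \<in> carrier_mat n n"
  shows "\<exists>D. equivalent_mat n A D \<and> Smith_normal_form_mat D"
  using assms
proof (induction n arbitrary: A)
  case 0
  then show ?case
    using equivalent_mat_refl[OF "0.prems"]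
    by (intro exI[of _ A]) (simp add: Smith_normal_form_mat_def diagonal_mat_def)
next
  case (Suc n)
  show ?case
  proof (cases "A = 0\<^sub>m (Suc n) (Suc n)")
    case True
    then show ?thesis
      using equivalent_mat_refl[OF Suc.prems]
      by (intro exI[of _ A]) (simp add: Smith_normal_form_mat_def diagonal_mat_def)
  next
    case False
    obtain d M where dM: "d \<noteq> 0" "M \<in> carrier_mat n n" "mat_dvd d M"
        "equivalent_mat (Suc n) A (corner_block d M)"
      using exists_equivalent_corner_block[OF Suc.prems False] by blast
    obtain D where D: "equivalent_mat n M D" "Smith_normal_form_mat D"
      using Suc.IH[OF dM(2)] by blast
    have "sgn d * sgn d = 1" "sgn d * d = \<bar>d\<bar>"
      using dM(1) by (simp_all add: sgn_if)
    then have "equivalent_mat (Suc n) A (corner_block \<bar>d\<bar> D)"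
      using equivalent_mat_trans[OF Suc.prems dM(4) equivalent_mat_corner_block[OF dM(2) D(1)]]
      by metis
    moreover have "Smith_normal_form_mat (corner_block \<bar>d\<bar> D)"
      using equivalent_mat_carrier[OF dM(2) D(1)] D(2) mat_dvd_equivalent_mat[OF dM(2) D(1) dM(3)]
      by (intro Smith_normal_form_corner_block) (auto simp: mat_dvd_def)
    ultimately show ?thesis by blast
  qed
qed

lemma det_diagonal_mat:
  assumes "D \<in> carrier_mat n n" "diagonal_mat (D :: 'a :: comm_ring_1 mat)"
  shows "det D = (\<Prod>i<n. D $$ (i, i))"
proof -
  have "upper_triangular D"
    using assms unfolding upper_triangular_def diagonal_mat_def by auto
  then show ?thesis
    using assms(1) det_upper_triangular[OF _ assms(1)]
    by (simp add: prod_list_diag_prod lessThan_atLeast0 carrier_matD)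
qed

lemma det_mult3:
  assumes "P \<in> carrier_mat n n" "A \<in> carrier_mat n n" "Q \<in> carrier_mat n n"
  shows "det (P * A * Q) = det P * det A * det (Q :: 'a :: comm_ring_1 mat)"
  using assms by (simp add: det_mult[of _ n])

lemma is_SNF_last_exists:
  fixes A :: "int mat"
  assumes A: "A \<in> carrier_mat n n" and n: "0 < n" and det: "det A \<noteq> 0"
  shows "\<exists>e. is_SNF_last A e"
proof -
  obtain D where D: "equivalent_mat n A D" "Smith_normal_form_mat D"
    using Smith_normal_form_exists[OF A] by blast
  obtain P Q where PQ: "P \<in> carrier_mat n n" "Q \<in> carrier_mat n n" "invertible_mat P"
      "invertible_mat Q" "D = P * A * Q"
    using D(1) unfolding equivalent_mat_def by blast
  have Dc: "D \<in> carrier_mat n n" using equivalent_mat_carrier[OF A D(1)] .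
  have "det D \<noteq> 0"
    using det_mult3[OF PQ(1) A PQ(2)] invertible_mat_det_nonzero[OF PQ(1,3)]
      invertible_mat_det_nonzero[OF PQ(2,4)] PQ(5) det by simp
  then have "D $$ (i, i) \<noteq> 0" if "i < n" for i
    using that det_diagonal_mat[OF Dc] D(2) unfolding Smith_normal_form_mat_def by auto
  then have "0 < D $$ (i, i)" if "i < n" for i
    using that D(2) Dc unfolding Smith_normal_form_mat_def by force
  then show ?thesis
    using A n PQ D(2) Dc unfolding is_SNF_last_def Let_def Smith_normal_form_mat_def diagonal_mat_def
    by (intro exI[of _ "D $$ (n - 1, n - 1)"] exI[of _ P] exI[of _ Q] exI[of _ n]) auto
qed

lemma is_SNF_last_prime_dvd:
  fixes A :: "int mat"
  assumes S: "is_SNF_last A e" and A: "A \<in> carrier_mat n n" and det: "det A \<noteq> 0"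
    and p: "prime p" "p dvd det A"
  shows "p dvd e"
proof -
  obtain P Q r where PQ: "P \<in> carrier_mat n n" "Q \<in> carrier_mat n n" "invertible_mat P"
      "invertible_mat Q" "1 \<le> r" "r \<le> n" "diagonal_mat (P * A * Q)"
      "\<forall>i. r \<le> i \<and> i < n \<longrightarrow> (P * A * Q) $$ (i, i) = 0"
      "\<forall>i. Suc i < r \<longrightarrow> (P * A * Q) $$ (i, i) dvd (P * A * Q) $$ (Suc i, Suc i)"
      "e = (P * A * Q) $$ (r - 1, r - 1)"
    using S A unfolding is_SNF_last_def Let_def diagonal_mat_def by auto
  define D where "D = P * A * Q"
  have Dc: "D \<in> carrier_mat n n" unfolding D_def using PQ A by auto
  have detD: "det D = det P * det A * det Q"
    unfolding D_def using det_mult3[OF PQ(1) A PQ(2)] .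
  have prod: "det D = (\<Prod>i<n. D $$ (i, i))"
    using det_diagonal_mat[OF Dc] PQ(7) unfolding D_def by blast
  have "r = n"
  proof (rule ccontr)
    assume "r \<noteq> n"
    then have "D $$ (r, r) = 0" using PQ(6,8) unfolding D_def by auto
    then have "det D = 0" using prod PQ(6) \<open>r \<noteq> n\<close> by (auto intro!: prod_zero bexI[of _ r])
    then show False
      using detD det invertible_mat_det_nonzero[OF PQ(1,3)] invertible_mat_det_nonzero[OF PQ(2,4)]
      by simp
  qed
  have "p dvd det D" using detD p(2) by simp
  then obtain i where i: "i < n" "p dvd D $$ (i, i)"
    using prod p(1) by (auto simp: prime_dvd_prod_iff)
  have "D $$ (i, i) dvd D $$ (j, j)" if "i \<le> j" "j < n" for j
    using that
  proof (induction j rule: dec_induct)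
    case (step k)
    then show ?case using PQ(9) \<open>r = n\<close> unfolding D_def by (auto intro: dvd_trans)
  qed simp
  then show ?thesis
    using i PQ(10) \<open>r = n\<close> unfolding D_def by (auto intro: dvd_trans)
qed

section \<open>Ideals and leading terms in Z[x_0, ..., x_(l-1)]\<close>

lemma zero_in_monos_l: "0 \<in> monos_l l"
  unfolding monos_l_def by simp

lemma monos_l_add: "a \<in> monos_l l \<Longrightarrow> b \<in> monos_l l \<Longrightarrow> a + b \<in> monos_l l"
  unfolding monos_l_def using keys_add[of a b] by auto

lemma monos_l_nonzero_split:
  assumes "m \<in> monos_l l" "m \<noteq> 0"
  shows "\<exists>k<l. \<exists>m'\<in>monos_l l. m = m' + Poly_Mapping.single k 1"
proof -
  obtain k where k: "k \<in> Poly_Mapping.keys m" using assms(2) by fastforce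
  have "k < l" using k assms(1) unfolding monos_l_def by auto
  define m' where "m' = m - Poly_Mapping.single k 1"
  have "m = m' + Poly_Mapping.single k 1"
    using k unfolding m'_def
    by (intro poly_mapping_eqI) (auto simp: lookup_add lookup_minus lookup_single in_keys_iff when_def)
  moreover have "m' \<in> monos_l l"
    using assms(1) keys_diff[of m "Poly_Mapping.single k 1"] \<open>k < l\<close>
    unfolding monos_l_def m'_def by auto
  ultimately show ?thesis using \<open>k < l\<close> by blast
qed

lemma zpolys_zero: "0 \<in> zpolys l"
  unfolding zpolys_def by simp

lemma zpolys_single: "m \<in> monos_l l \<Longrightarrow> Poly_Mapping.single m c \<in> zpolys l"
  unfolding zpolys_def by auto

lemma zpolys_add: "f \<in> zpolys l \<Longrightarrow> g \<in> zpolys l \<Longrightarrow> f + g \<in> zpolys l"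
  unfolding zpolys_def using keys_add[of f g] by auto

lemma zpolys_mult: "f \<in> zpolys l \<Longrightarrow> g \<in> zpolys l \<Longrightarrow> f * g \<in> zpolys l"
  unfolding zpolys_def using keys_mult[of f g] monos_l_add by fastforce

lemma zpolys_sum: "(\<And>x. x \<in> A \<Longrightarrow> f x \<in> zpolys l) \<Longrightarrow> (\<Sum>x\<in>A. f x) \<in> zpolys l"
  by (induction A rule: infinite_finite_induct) (auto simp: zpolys_zero zpolys_add)

lemma ideal_gen_subset_zpolys: "S \<subseteq> zpolys l \<Longrightarrow> ideal_gen l S \<subseteq> zpolys l"
  unfolding ideal_gen_def by (auto intro!: zpolys_sum zpolys_mult)

lemma ideal_gen_zero: "0 \<in> ideal_gen l S"
  unfolding ideal_gen_def using zpolys_zero by (intro CollectI exI[of _ "\<lambda>_. 0"]) auto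

lemma ideal_gen_add:
  assumes "f \<in> ideal_gen l S" "g \<in> ideal_gen l S"
  shows "f + g \<in> ideal_gen l S"
proof -
  obtain a b where "f = (\<Sum>s\<in>S. a s * s)" "g = (\<Sum>s\<in>S. b s * s)"
      "\<forall>s\<in>S. a s \<in> zpolys l" "\<forall>s\<in>S. b s \<in> zpolys l"
    using assms unfolding ideal_gen_def by blast
  then show ?thesis
    unfolding ideal_gen_def
    by (intro CollectI exI[of _ "\<lambda>s. a s + b s"]) (auto simp: sum.distrib distrib_right zpolys_add)
qed

lemma ideal_gen_mult:
  assumes "f \<in> ideal_gen l S" "c \<in> zpolys l"
  shows "c * f \<in> ideal_gen l S"
proof -
  obtain a where "f = (\<Sum>s\<in>S. a s * s)" "\<forall>s\<in>S. a s \<in> zpolys l"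
    using assms(1) unfolding ideal_gen_def by blast
  then show ?thesis
    unfolding ideal_gen_def using assms(2)
    by (intro CollectI exI[of _ "\<lambda>s. c * a s"]) (auto simp: sum_distrib_left mult.assoc zpolys_mult)
qed

lemma ideal_gen_generator:
  assumes "finite S" "s \<in> S"
  shows "s \<in> ideal_gen l S"
proof -
  have "(\<Sum>t\<in>S. (if t = s then 1 else 0) * t) = s"
    using assms by (simp add: if_distrib[of "\<lambda>x. x * _"] cong: if_cong)
  moreover have "(1 :: zpoly) \<in> zpolys l"
    using zpolys_single[OF zero_in_monos_l, where c = 1] by simp
  ultimately show ?thesis
    unfolding ideal_gen_def using zpolys_zero
    by (intro CollectI exI[of _ "\<lambda>t. if t = s then 1 else 0"]) auto
qed

lemma ideal_gen_sum:
  "(\<And>x. x \<in> A \<Longrightarrow> f x \<in> ideal_gen l S) \<Longrightarrow> (\<Sum>x\<in>A. f x) \<in> ideal_gen l S"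
  by (induction A rule: infinite_finite_induct) (auto simp: ideal_gen_zero ideal_gen_add)

lemma const_free_mult:
  assumes "0 \<notin> Poly_Mapping.keys (g :: zpoly)"
  shows "0 \<notin> Poly_Mapping.keys (f * g)"
proof
  assume "0 \<in> Poly_Mapping.keys (f * g)"
  then obtain a b where "0 = a + b" "b \<in> Poly_Mapping.keys g"
    using keys_mult[of f g] by blast
  then show False using assms by (metis add_is_0 lookup_add lookup_zero poly_mapping_eqI)
qed

lemma ideal_gen_const_free:
  assumes "\<And>s. s \<in> S \<Longrightarrow> 0 \<notin> Poly_Mapping.keys s" "f \<in> ideal_gen l S"
  shows "0 \<notin> Poly_Mapping.keys f"
proof -
  obtain a where "f = (\<Sum>s\<in>S. a s * s)" using assms(2) unfolding ideal_gen_def by blast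
  then show ?thesis
    using assms(1) const_free_mult keys_sum[of "\<lambda>s. a s * s" S] by blast
qed

lemma term_order_refl: "term_order l ord \<Longrightarrow> m \<in> monos_l l \<Longrightarrow> ord m m"
  unfolding term_order_def by blast

lemma term_order_trans:
  "term_order l ord \<Longrightarrow> m1 \<in> monos_l l \<Longrightarrow> m2 \<in> monos_l l \<Longrightarrow> m3 \<in> monos_l l \<Longrightarrow>
    ord m1 m2 \<Longrightarrow> ord m2 m3 \<Longrightarrow> ord m1 m3"
  unfolding term_order_def by blast

lemma term_order_antisym:
  "term_order l ord \<Longrightarrow> m1 \<in> monos_l l \<Longrightarrow> m2 \<in> monos_l l \<Longrightarrow> ord m1 m2 \<Longrightarrow> ord m2 m1 \<Longrightarrow> m1 = m2"
  unfolding term_order_def by blast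

lemma term_order_total:
  "term_order l ord \<Longrightarrow> m1 \<in> monos_l l \<Longrightarrow> m2 \<in> monos_l l \<Longrightarrow> ord m1 m2 \<or> ord m2 m1"
  unfolding term_order_def by blast

lemma term_order_has_max:
  assumes ord: "term_order l ord" and "finite X" "X \<noteq> {}" "X \<subseteq> monos_l l"
  shows "\<exists>m\<in>X. \<forall>m'\<in>X. ord m' m"
  using assms(2-4)
proof (induction X rule: finite_ne_induct)
  case (singleton x)
  then show ?case using term_order_refl[OF ord] by auto
next
  case (insert x X)
  then obtain m where m: "m \<in> X" "\<forall>m'\<in>X. ord m' m" by auto
  have x: "x \<in> monos_l l" and "m \<in> monos_l l" using insert.prems m(1) by auto
  show ?case
  proof (cases "ord x m")
    case True
    then show ?thesis using m by auto
  next
    case False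
    then have "ord m x" using term_order_total[OF ord x \<open>m \<in> monos_l l\<close>] by blast
    then have "\<forall>m'\<in>X. ord m' x"
      using m insert.prems term_order_trans[OF ord _ \<open>m \<in> monos_l l\<close> x] by blast
    then show ?thesis using term_order_refl[OF ord x] by auto
  qed
qed

lemma lead_mono_eqI:
  assumes ord: "term_order l ord" and f: "f \<in> zpolys l"
    and m: "m \<in> Poly_Mapping.keys f" "\<forall>m'\<in>Poly_Mapping.keys f. ord m' m"
  shows "lead_mono ord f = m"
  unfolding lead_mono_def
proof (rule the_equality)
  fix m2 assume m2: "m2 \<in> Poly_Mapping.keys f \<and> (\<forall>m'\<in>Poly_Mapping.keys f. ord m' m2)"
  then show "m2 = m"
    using m f term_order_antisym[OF ord, of m2 m] unfolding zpolys_def by auto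
qed (use m in blast)

lemma lead_mono_greatest_key:
  assumes ord: "term_order l ord" and f: "f \<in> zpolys l" "f \<noteq> 0"
  shows "lead_mono ord f \<in> Poly_Mapping.keys f"
    and "\<forall>m\<in>Poly_Mapping.keys f. ord m (lead_mono ord f)"
proof -
  have "Poly_Mapping.keys f \<noteq> {}" "Poly_Mapping.keys f \<subseteq> monos_l l"
    using f unfolding zpolys_def by auto
  then obtain m where "m \<in> Poly_Mapping.keys f" "\<forall>m'\<in>Poly_Mapping.keys f. ord m' m"
    using term_order_has_max[OF ord finite_keys] by blast
  with lead_mono_eqI[OF ord f(1)] show "lead_mono ord f \<in> Poly_Mapping.keys f"
    and "\<forall>m\<in>Poly_Mapping.keys f. ord m (lead_mono ord f)"
    by auto
qed

lemma lookup_const_mult: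
  "Poly_Mapping.lookup (Poly_Mapping.single 0 c * (f :: zpoly)) m = c * Poly_Mapping.lookup f m"
  by (simp add: mult_map_scale_conv_mult[symmetric] map.rep_eq when_def)

lemma gcd_lead_coeff_in_ideal:
  fixes d :: int
  assumes ord: "term_order l ord" and S: "S \<subseteq> zpolys l"
    and const_free: "\<forall>f\<in>ideal_gen l S. 0 \<notin> Poly_Mapping.keys f"
    and d: "\<forall>k<l. Poly_Mapping.single 0 d * Var k \<in> ideal_gen l S"
    and g: "g \<in> ideal_gen l S" "g \<noteq> 0"
  shows "\<exists>f\<in>ideal_gen l S. f \<noteq> 0 \<and> lead_mono ord f = lead_mono ord g \<and>
    lead_coeff_z ord f = gcd (lead_coeff_z ord g) d"
proof -
  let ?I = "ideal_gen l S"
  define m where "m = lead_mono ord g"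
  define c where "c = lead_coeff_z ord g"
  have gz: "g \<in> zpolys l" using g(1) ideal_gen_subset_zpolys[OF S] by blast
  have m: "m \<in> Poly_Mapping.keys g" "\<forall>x\<in>Poly_Mapping.keys g. ord x m"
    using lead_mono_greatest_key[OF ord gz g(2)] unfolding m_def by auto
  have "m \<noteq> 0" using m(1) const_free g(1) by auto
  moreover have mm: "m \<in> monos_l l" using m(1) gz unfolding zpolys_def by auto
  ultimately obtain k m' where km: "k < l" "m' \<in> monos_l l" "m = m' + Poly_Mapping.single k 1"
    using monos_l_nonzero_split by blast
  obtain u v where uv: "u * c + v * d = gcd c d" using bezout_int by blast
  \<comment> \<open>the second summand is v d m, so only the coefficient of the leading monomial m changes\<close>
  define f where
    "f = Poly_Mapping.single 0 u * g + Poly_Mapping.single m' v * (Poly_Mapping.single 0 d * Var k)"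
  have "Poly_Mapping.single 0 d * Var k \<in> ?I" using d km(1) by blast
  then have "f \<in> ?I"
    unfolding f_def
    using ideal_gen_add[OF ideal_gen_mult[OF g(1)] ideal_gen_mult] zpolys_single zero_in_monos_l km(2)
    by blast
  have "Poly_Mapping.single m' v * (Poly_Mapping.single 0 d * Var k) = Poly_Mapping.single m (v * d)"
    unfolding Var_def km(3) by (simp add: mult_single)
  then have lookup_f:
    "Poly_Mapping.lookup f x = u * Poly_Mapping.lookup g x + (if x = m then v * d else 0)" for x
    unfolding f_def lookup_add lookup_const_mult by (simp add: lookup_single when_def)
  have "Poly_Mapping.lookup f m = gcd c d"
    using lookup_f[of m] uv unfolding c_def lead_coeff_z_def m_def by simp
  moreover have "gcd c d \<noteq> 0"
    using m(1) unfolding c_def lead_coeff_z_def m_def by (simp add: in_keys_iff)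
  ultimately have "m \<in> Poly_Mapping.keys f" by (simp add: in_keys_iff)
  moreover have "\<forall>x\<in>Poly_Mapping.keys f. ord x m"
    using m term_order_refl[OF ord mm] lookup_f by (auto simp: in_keys_iff split: if_splits)
  moreover have "f \<in> zpolys l" using \<open>f \<in> ?I\<close> ideal_gen_subset_zpolys[OF S] by blast
  ultimately have "lead_mono ord f = m" using lead_mono_eqI[OF ord] by blast
  then show ?thesis
    using \<open>f \<in> ?I\<close> \<open>m \<in> Poly_Mapping.keys f\<close> \<open>Poly_Mapping.lookup f m = gcd c d\<close>
    unfolding lead_coeff_z_def c_def m_def by (intro bexI[of _ f]) auto
qed

lemma min_strong_GB_lead_coeff_dvd:
  fixes d :: int
  assumes ord: "term_order l ord" and S: "S \<subseteq> zpolys l"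
    and const_free: "\<forall>f\<in>ideal_gen l S. 0 \<notin> Poly_Mapping.keys f"
    and d: "\<forall>k<l. Poly_Mapping.single 0 d * Var k \<in> ideal_gen l S"
    and G: "is_min_strong_GB l ord (ideal_gen l S) G" and g: "g \<in> G"
  shows "lead_coeff_z ord g dvd d"
proof -
  have "g \<in> ideal_gen l S" "g \<noteq> 0" using G g unfolding is_min_strong_GB_def by auto
  then obtain f where f: "f \<in> ideal_gen l S" "f \<noteq> 0" "lead_mono ord f = lead_mono ord g"
      "lead_coeff_z ord f = gcd (lead_coeff_z ord g) d"
    using gcd_lead_coeff_in_ideal[OF ord S const_free d] by blast
  then obtain g' where g': "g' \<in> G" "lm_dvd ord g' f"
    using G unfolding is_min_strong_GB_def by blast
  \<comment> \<open>LC f divides LC g, so g' also divides the leading term of g\<close>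
  then have "lm_dvd ord g' g"
    using f(3,4) unfolding lm_dvd_def by (metis dvd_trans gcd_dvd1)
  then have "g' = g" using G g g'(1) unfolding is_min_strong_GB_def by blast
  then show ?thesis using g'(2) f(4) unfolding lm_dvd_def by (metis dvd_trans gcd_dvd2)
qed

section \<open>The ideals of the arrangement\<close>

lemma single_sum: "Poly_Mapping.single k (\<Sum>x\<in>A. f x) = (\<Sum>x\<in>A. Poly_Mapping.single k (f x))"
  using sum_comp_morphism[of "Poly_Mapping.single k" f A] by (simp add: single_add comp_def)

lemma lin_form_expand:
  "lin_form C i = (\<Sum>k<dim_row C. Poly_Mapping.single (Poly_Mapping.single k 1) (C $$ (k, i)))"
  unfolding lin_form_def Var_def by (simp add: mult_single)

lemma lin_form_zpolys: "lin_form C i \<in> zpolys (dim_row C)"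
  unfolding lin_form_expand by (intro zpolys_sum zpolys_single) (auto simp: monos_l_def)

lemma lin_form_const_free: "0 \<notin> Poly_Mapping.keys (lin_form C i)"
proof
  assume "0 \<in> Poly_Mapping.keys (lin_form C i)"
  then obtain k where "(0 :: mono) = Poly_Mapping.single k 1"
    unfolding lin_form_expand using keys_sum by (fastforce split: if_splits)
  then show False by (metis lookup_single_eq lookup_zero one_neq_zero)
qed

lemma det_times_Var_in_ideal:
  assumes C: "dim_row C = l" and J: "finite J" "card J = l" and k: "k < l"
  shows "Poly_Mapping.single 0 (det (col_submat C J)) * Var k \<in> ideal_gen l (lin_form C ` J)"
proof -
  define js where "js = sorted_list_of_set J"
  define M where "M = col_submat C J"
  have M: "M \<in> carrier_mat l l" unfolding M_def col_submat_def using C J by simp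
  have M_index: "M $$ (i, t) = C $$ (i, js ! t)" if "i < l" "t < l" for i t
    unfolding M_def col_submat_def js_def using that C J by simp
  define adj where "adj = adj_mat M"
  have adj: "adj \<in> carrier_mat l l" "M * adj = det M \<cdot>\<^sub>m 1\<^sub>m l"
    using adj_mat[OF M] unfolding adj_def by auto
  \<comment> \<open>Cramer's rule: column k of the adjugate combines the forms into det M times x_k\<close>
  have cramer: "(\<Sum>t<l. M $$ (i, t) * adj $$ (t, k)) = (if i = k then det M else 0)" if "i < l" for i
  proof -
    have "(M * adj) $$ (i, k) = (\<Sum>t<l. M $$ (i, t) * adj $$ (t, k))"
      using M adj(1) that k by (simp add: scalar_prod_def lessThan_atLeast0)
    moreover have "(M * adj) $$ (i, k) = (if i = k then det M else 0)"
      unfolding adj(2) using that k by simp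
    ultimately show ?thesis by simp
  qed
  have "(\<Sum>t<l. Poly_Mapping.single 0 (adj $$ (t, k)) * lin_form C (js ! t))
      = (\<Sum>t<l. \<Sum>i<l. Poly_Mapping.single (Poly_Mapping.single i 1) (adj $$ (t, k) * C $$ (i, js ! t)))"
    unfolding lin_form_expand C by (simp add: sum_distrib_left mult_single)
  also have "\<dots> = (\<Sum>i<l. \<Sum>t<l. Poly_Mapping.single (Poly_Mapping.single i 1) (adj $$ (t, k) * C $$ (i, js ! t)))"
    by (rule sum.swap)
  also have "\<dots> = (\<Sum>i<l. Poly_Mapping.single (Poly_Mapping.single i 1) (\<Sum>t<l. M $$ (i, t) * adj $$ (t, k)))"
    by (intro sum.cong refl) (simp add: single_sum M_index mult.commute)
  also have "\<dots> = Poly_Mapping.single 0 (det M) * Var k"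
    using k by (simp add: cramer if_distrib[of "Poly_Mapping.single _"] Var_def mult_single cong: if_cong)
  finally have "Poly_Mapping.single 0 (det M) * Var k =
      (\<Sum>t<l. Poly_Mapping.single 0 (adj $$ (t, k)) * lin_form C (js ! t))" ..
  moreover have "Poly_Mapping.single 0 (adj $$ (t, k)) * lin_form C (js ! t) \<in> ideal_gen l (lin_form C ` J)"
    if "t < l" for t
  proof (intro ideal_gen_mult ideal_gen_generator zpolys_single zero_in_monos_l)
    show "lin_form C (js ! t) \<in> lin_form C ` J"
      using that J unfolding js_def by (metis imageI nth_mem set_sorted_list_of_set length_sorted_list_of_set)
  qed (use J in simp)
  then have "(\<Sum>t<l. Poly_Mapping.single 0 (adj $$ (t, k)) * lin_form C (js ! t)) \<in> ideal_gen l (lin_form C ` J)"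
    by (intro ideal_gen_sum) simp
  ultimately show ?thesis unfolding M_def by simp
qed

lemma lead_coeff_dvd_det_col_submat:
  assumes ord: "term_order l ord" and C: "dim_row C = l" and J: "finite J" "card J = l"
    and G: "is_min_strong_GB l ord (ideal_gen l (lin_form C ` J)) G" and g: "g \<in> G"
  shows "lead_coeff_z ord g dvd det (col_submat C J)"
proof (rule min_strong_GB_lead_coeff_dvd[OF ord _ _ _ G g])
  show "lin_form C ` J \<subseteq> zpolys l" using lin_form_zpolys[of C] C by auto
  show "\<forall>f\<in>ideal_gen l (lin_form C ` J). 0 \<notin> Poly_Mapping.keys f"
    using ideal_gen_const_free[of "lin_form C ` J"] lin_form_const_free by blast
  show "\<forall>k<l. Poly_Mapping.single 0 (det (col_submat C J)) * Var k \<in> ideal_gen l (lin_form C ` J)"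
    using det_times_Var_in_ideal[OF C J] by blast
qed

lemma det_col_submat_nonzero:
  assumes C: "dim_row C = l" and J: "finite J" "card J = l"
    and essential: "{x. dim_vec x = l} \<inter> (\<Inter>i\<in>J. hyp C i) = {0\<^sub>v l}"
  shows "det (col_submat C J) \<noteq> 0"
proof
  assume "det (col_submat C J) = 0"
  define js where "js = sorted_list_of_set J"
  define M where "M = col_submat C J"
  have js: "set js = J" "length js = l" unfolding js_def using J by auto
  have M: "M \<in> carrier_mat l l" unfolding M_def col_submat_def using C J by simp
  have M_index: "M $$ (i, t) = C $$ (i, js ! t)" if "i < l" "t < l" for i t
    unfolding M_def col_submat_def js_def using that C J by simp
  have "det (transpose_mat M) = 0"
    using \<open>det (col_submat C J) = 0\<close> det_transpose[OF M] unfolding M_def by simp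
  then obtain v where v: "v \<in> carrier_vec l" "v \<noteq> 0\<^sub>v l" "transpose_mat M *\<^sub>v v = 0\<^sub>v l"
    using det_0_iff_vec_prod_zero[of "transpose_mat M" l] M by auto
  define x where "x = map_vec rat_of_int v"
  have x_dim: "dim_vec x = l" unfolding x_def using v(1) by simp
  have x_index: "x $ k = rat_of_int (v $ k)" if "k < l" for k
    unfolding x_def using v(1) that by simp
  have "x \<in> hyp C i" if i: "i \<in> J" for i
  proof -
    obtain t where t: "t < l" "i = js ! t"
      using i js in_set_conv_nth[of i js] by auto
    have "(\<Sum>k<l. C $$ (k, i) * v $ k) = (transpose_mat M *\<^sub>v v) $ t"
      using M v(1) t by (simp add: scalar_prod_def lessThan_atLeast0 M_index)
    also have "\<dots> = 0" using v(3) t(1) by simp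
    finally have "(\<Sum>k<l. C $$ (k, i) * v $ k) = 0" .
    moreover have "(\<Sum>k<l. of_int (C $$ (k, i)) * x $ k) = rat_of_int (\<Sum>k<l. C $$ (k, i) * v $ k)"
      using x_index by (simp add: of_int_sum)
    ultimately have "(\<Sum>k<l. of_int (C $$ (k, i)) * x $ k) = 0" by simp
    then show ?thesis unfolding hyp_def using x_dim C by simp
  qed
  then have "x = 0\<^sub>v l" using essential x_dim by blast
  then have "v = 0\<^sub>v l" using v(1) x_index by (intro eq_vecI) (auto dest: arg_cong[of _ _ "\<lambda>y. y $ _"])
  then show False using v(2) by simp
qed

lemma prime_dvd_e_of:
  assumes M: "col_submat C J \<in> carrier_mat l l" and l: "0 < l"
    and det: "det (col_submat C J) \<noteq> 0" and p: "prime p" "p dvd det (col_submat C J)"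
  shows "p dvd e_of C J"
proof -
  have "is_SNF_last (col_submat C J) (e_of C J)"
    unfolding e_of_def using is_SNF_last_exists[OF M l det] by (rule someI_ex)
  then show ?thesis using is_SNF_last_prime_dvd[OF _ M det p] by blast
qed

theorem proposition7p5:
  fixes l n :: nat and C :: "int mat" and ord :: "mono \<Rightarrow> mono \<Rightarrow> bool" and p :: nat
  assumes "central_essential_arr l n C"
    and "term_order l ord"
    and "prime p"
    and "\<not> sigma_l_lucky l n C ord p"
  shows "int p dvd rho0 l n C"
proof -
  have C: "dim_row C = l" using assms(1) unfolding central_essential_arr_def by auto
  obtain J where J: "J \<subseteq> {..<n}" "card J = l" "{x. dim_vec x = l} \<inter> (\<Inter>i\<in>J. hyp C i) = {0\<^sub>v l}"
      "\<not> sigma_lucky l ord (ideal_gen l (lin_form C ` J)) p"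
    using assms(4) unfolding sigma_l_lucky_def by blast
  obtain G g where G: "is_min_strong_GB l ord (ideal_gen l (lin_form C ` J)) G" "g \<in> G"
      "int p dvd lead_coeff_z ord g"
    using J(4) unfolding sigma_lucky_def by blast
  have fin: "finite J" using J(1) finite_subset by blast
  have M: "col_submat C J \<in> carrier_mat l l" unfolding col_submat_def using C J(2) by simp
  have "lead_coeff_z ord g dvd det (col_submat C J)"
    using lead_coeff_dvd_det_col_submat[OF assms(2) C fin J(2) G(1,2)] .
  with G(3) have p_dvd: "int p dvd det (col_submat C J)" by (rule dvd_trans)
  have "l \<noteq> 0"
  proof
    assume "l = 0"
    then have "det (col_submat C J) = 1" using M by (simp add: det_def)
    then show False using p_dvd assms(3) by simp
  qed
  then have "int p dvd e_of C J"
    using prime_dvd_e_of[OF M _ det_col_submat_nonzero[OF C fin J(2,3)] _ p_dvd] assms(3) by simp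
  moreover have "e_of C J dvd rho0 l n C"
    unfolding rho0_def using J(1,2) \<open>l \<noteq> 0\<close> by (intro dvd_Lcm) auto
  ultimately show ?thesis by (rule dvd_trans)
qed

end
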